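(* For every integer $d\geqslant 1$ and every real $x>0$, $$Q_d(x)=\vartheta(d)\sqrt x+O(d^2),$$ with an absolute implied constant. Here $$\vartheta(d)=\frac{32d^2}{5}\sqrt d-\frac{48d^2+16d-2}{15}\sqrt{d+1}-\frac{48d^2-16d-2}{15}\sqrt{d-1}.$$
   Context: For real $t$, $\lfloor t\rfloor$ is the integer part and $\{t\}=t-\lfloor t\rfloor$ the fractional part. For an integer $d\geqslant 0$ and real $x>0$, $$Q_d(x)=\sum_{n\geqslant 1}\big[\lfloor x/n\rfloor-\lfloor x/(n+1)\rfloor=d\big]\cdot\big(\{x/n\}-\{x/(n+1)\}\big)^2,$$ where $[P]$ equals $1$ if the proposition $P$ is true and $0$ otherwise. *)

theory Defs
  imports "HOL-Analysis.Analysis"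
begin

definition frac_part :: "real \<Rightarrow> real" where
  "frac_part t = t - of_int \<lfloor>t\<rfloor>"

definition Q :: "nat \<Rightarrow> real \<Rightarrow> real" where
  "Q d x = infsum (\<lambda>n::nat.
      (if \<lfloor>x / real n\<rfloor> - \<lfloor>x / real (n+1)\<rfloor> = int d
       then (frac_part (x / real n) - frac_part (x / real (n+1)))\<^sup>2 else 0)) {1..}"

definition vartheta :: "nat \<Rightarrow> real" where
  "vartheta d = 32 * (real d)\<^sup>2 / 5 * sqrt (real d)
     - (48 * (real d)\<^sup>2 + 16 * real d - 2) / 15 * sqrt (real d + 1)
     - (48 * (real d)\<^sup>2 - 16 * real d - 2) / 15 * sqrt (real d - 1)"

end

theory Submission
  imports Defs
begin

text \<open>
  Write \<open>e\<^sub>n = x/(n(n+1)) - d\<close> and \<open>s\<^sub>n = {x/n} - {x/(n+1)}\<close>. Then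
  \<open>\<lfloor>x/n\<rfloor> - \<lfloor>x/(n+1)\<rfloor> - d = e\<^sub>n - s\<^sub>n\<close> with \<open>|s\<^sub>n| < 1\<close>, and a case analysis shows that the
  \<open>n\<close>-th summand of \<open>Q\<^sub>d(x)\<close> equals \<open>bump(e\<^sub>n) + s\<^sub>n (m(e\<^sub>n) - j(e\<^sub>n))\<close>, where
  \<open>bump(e) = (1 - |e|) e\<^sup>2\<close> for \<open>|e| < 1\<close> and \<open>m\<close>, \<open>j\<close> are bounded and nondecreasing.
  Since \<open>s\<^sub>n\<close> is a difference of consecutive terms and \<open>e\<^sub>n\<close> decreases in \<open>n\<close>, Abel
  summation bounds the second part by a constant. The first part is a Riemann sum for
  \<open>\<integral>\<^sub>1\<^sup>\<infinity> bump(x/u\<^sup>2 - d) du\<close>; as \<open>bump\<close> is 5-Lipschitz and vanishes unless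
  \<open>x/u\<^sup>2 < d + 1\<close>, the error is \<open>O(d)\<close>. The substitution \<open>t = x/u\<^sup>2\<close> makes the integral
  elementary, and for \<open>x \<ge> d + 1\<close> it equals \<open>\<vartheta>(d)\<surd>x + O(1)\<close>. Small \<open>x\<close> are covered by
  \<open>0 \<le> Q\<^sub>d(x) \<le> x/d\<close> and the bound on \<open>\<vartheta>(d)\<close> obtained at \<open>x = d + 1\<close>.
\<close>

section \<open>Abel summation\<close>

lemma frac_part_bounds: "0 \<le> frac_part t" "frac_part t < 1"
  unfolding frac_part_def by linarith+

lemma sum_telescope_atLeast1:
  fixes f :: "nat \<Rightarrow> 'a::ab_group_add"
  shows "(\<Sum>n=1..N. f n - f (Suc n)) = f 1 - f (Suc N)"
  by (induction N) (simp_all add: algebra_simps)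

lemma abel_sum_remainder_bound:
  fixes f c :: "nat \<Rightarrow> real"
  assumes c_dec: "\<And>n. n \<ge> 1 \<Longrightarrow> c (Suc n) \<le> c n" and f_bound: "\<And>n. \<bar>f n\<bar> \<le> M"
    and "N \<ge> 1"
  shows "\<bar>(\<Sum>n=1..N. (f n - f (Suc n)) * c n) - f 1 * c 1 + f (Suc N) * c N\<bar> \<le> M * (c 1 - c N)"
  using \<open>N \<ge> 1\<close>
proof (induction N rule: dec_induct)
  case base
  then show ?case by (simp add: algebra_simps)
next
  case (step N)
  have "\<bar>f (Suc N) * (c (Suc N) - c N)\<bar> \<le> M * (c N - c (Suc N))"
    using c_dec[OF step.hyps(1)] f_bound[of "Suc N"] by (simp add: abs_mult mult_right_mono)
  then show ?case using step.IH by (simp add: algebra_simps)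
qed

lemma abel_sum_bound:
  fixes f c :: "nat \<Rightarrow> real"
  assumes c_dec: "\<And>n. n \<ge> 1 \<Longrightarrow> c (Suc n) \<le> c n"
    and f_bound: "\<And>n. \<bar>f n\<bar> \<le> M" and c_bound: "\<And>n. \<bar>c n\<bar> \<le> K"
  shows "\<bar>\<Sum>n=1..N. (f n - f (Suc n)) * c n\<bar> \<le> 4 * M * K"
proof (cases "N = 0")
  case True
  have "0 \<le> M" "0 \<le> K" using f_bound[of 0] c_bound[of 0] by linarith+
  with True show ?thesis by simp
next
  case False
  have "\<bar>f 1 * c 1\<bar> \<le> M * K" "\<bar>f (Suc N) * c N\<bar> \<le> M * K"
    using f_bound c_bound by (simp_all add: abs_mult mult_mono')
  moreover have "M * (c 1 - c N) \<le> M * (2 * K)"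
    using f_bound[of 0] c_bound[of 1] c_bound[of N] by (intro mult_left_mono) auto
  ultimately show ?thesis
    using abel_sum_remainder_bound[of c f M N, OF c_dec f_bound] False by (simp add: abs_le_iff)
qed

section \<open>Splitting the summand of \<open>Q\<^sub>d(x)\<close>\<close>

definition bump :: "real \<Rightarrow> real" where
  "bump e = (if \<bar>e\<bar> < 1 then (1 - \<bar>e\<bar>) * e\<^sup>2 else 0)"

definition clipped_square :: "real \<Rightarrow> real" where
  "clipped_square e = (if 1 \<le> e then 1 else if e \<le> -1 then -1 else e * \<bar>e\<bar>)"

definition unit_jump :: "real \<Rightarrow> real" where
  "unit_jump e = (if 1 \<le> e then 1 else if e \<le> -1 then -1 else 0)"

lemma bump_decomposition:
  fixes k :: int and e s :: real
  assumes s: "\<bar>s\<bar> < 1" and k: "of_int k = e - s"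
  shows "(if k = 0 then s\<^sup>2 else 0) = bump e + s * (clipped_square e - unit_jump e)"
proof (cases "\<bar>e\<bar> < 1")
  case False
  then have "k \<noteq> 0" using s k by auto
  with False show ?thesis by (auto simp: bump_def clipped_square_def unit_jump_def)
next
  case True
  then have "\<bar>of_int k\<bar> < (2::real)" using s k by linarith
  then consider "k = 0" | "k = 1" | "k = -1" by linarith
  then show ?thesis
    using True s k by cases (auto simp: bump_def clipped_square_def unit_jump_def abs_if
        power2_eq_square algebra_simps)
qed

lemma bump_eq_clamp: "bump e = (max (-1) (min e 1))\<^sup>2 - \<bar>max (-1) (min e 1)\<bar> ^ 3"
  unfolding bump_def
  by (auto simp: max_def min_def power2_eq_square eval_nat_numeral algebra_simps abs_if)

lemma bump_lipschitz: "\<bar>bump a - bump b\<bar> \<le> 5 * \<bar>a - b\<bar>"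
proof -
  define p where "p = max (-1) (min a (1::real))"
  define q where "q = max (-1) (min b (1::real))"
  have pq: "\<bar>p\<bar> \<le> 1" "\<bar>q\<bar> \<le> 1" "\<bar>p - q\<bar> \<le> \<bar>a - b\<bar>"
    unfolding p_def q_def by (auto simp: max_def min_def)
  have square: "\<bar>p\<^sup>2 - q\<^sup>2\<bar> \<le> 2 * \<bar>p - q\<bar>"
  proof -
    have "\<bar>p\<^sup>2 - q\<^sup>2\<bar> = \<bar>p - q\<bar> * \<bar>p + q\<bar>"
      by (simp add: power2_eq_square algebra_simps flip: abs_mult)
    also have "\<dots> \<le> \<bar>p - q\<bar> * 2" using pq by (intro mult_left_mono) auto
    finally show ?thesis by simp
  qed
  have cube: "\<bar>\<bar>p\<bar> ^ 3 - \<bar>q\<bar> ^ 3\<bar> \<le> 3 * \<bar>\<bar>p\<bar> - \<bar>q\<bar>\<bar>"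
  proof -
    have "\<bar>p\<bar> ^ 3 - \<bar>q\<bar> ^ 3 = (\<bar>p\<bar> - \<bar>q\<bar>) * (p\<^sup>2 + \<bar>p\<bar> * \<bar>q\<bar> + q\<^sup>2)"
      by (simp add: power2_eq_square eval_nat_numeral algebra_simps)
    then have "\<bar>\<bar>p\<bar> ^ 3 - \<bar>q\<bar> ^ 3\<bar> = \<bar>\<bar>p\<bar> - \<bar>q\<bar>\<bar> * (p\<^sup>2 + \<bar>p\<bar> * \<bar>q\<bar> + q\<^sup>2)"
      by (simp add: abs_mult)
    also have "\<dots> \<le> \<bar>\<bar>p\<bar> - \<bar>q\<bar>\<bar> * 3"
    proof (intro mult_left_mono)
      have "p\<^sup>2 \<le> 1" "q\<^sup>2 \<le> 1" "\<bar>p\<bar> * \<bar>q\<bar> \<le> 1"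
        using pq by (simp_all add: abs_square_le_1 mult_le_one)
      then show "p\<^sup>2 + \<bar>p\<bar> * \<bar>q\<bar> + q\<^sup>2 \<le> 3" by linarith
    qed simp
    finally show ?thesis by simp
  qed
  have "\<bar>bump a - bump b\<bar> \<le> \<bar>p\<^sup>2 - q\<^sup>2\<bar> + \<bar>\<bar>p\<bar> ^ 3 - \<bar>q\<bar> ^ 3\<bar>"
    unfolding bump_eq_clamp p_def[symmetric] q_def[symmetric] by linarith
  also have "\<dots> \<le> 5 * \<bar>a - b\<bar>"
    using square cube pq(3) abs_triangle_ineq3[of p q] by linarith
  finally show ?thesis .
qed

lemma clipped_square_mono: "a \<le> b \<Longrightarrow> clipped_square a \<le> clipped_square b"
proof -
  have square_mono: "a * \<bar>a\<bar> \<le> b * \<bar>b\<bar>" if "a \<le> b" for a b :: real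
    using that mult_mono[of a b a b] mult_mono[of "-b" "-a" "-b" "-a"] by (auto simp: abs_if)
  have square_le_1: "\<bar>a * \<bar>a\<bar>\<bar> \<le> 1" if "\<bar>a\<bar> < 1" for a :: real
    using that mult_le_one[of "\<bar>a\<bar>" "\<bar>a\<bar>"] by (simp add: abs_mult)
  show "a \<le> b \<Longrightarrow> clipped_square a \<le> clipped_square b"
    unfolding clipped_square_def using square_mono[of a b] square_le_1[of a] square_le_1[of b]
    by (auto simp: abs_le_iff)
qed

lemma abs_clipped_square_le: "\<bar>clipped_square a\<bar> \<le> 1"
  using mult_le_one[of "\<bar>a\<bar>" "\<bar>a\<bar>"] unfolding clipped_square_def
  by (auto simp: abs_mult abs_mult_self_eq)

lemma unit_jump_mono: "a \<le> b \<Longrightarrow> unit_jump a \<le> unit_jump b"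
  unfolding unit_jump_def by auto

lemma abs_unit_jump_le: "\<bar>unit_jump a\<bar> \<le> 1"
  unfolding unit_jump_def by auto

definition Q_term :: "nat \<Rightarrow> real \<Rightarrow> nat \<Rightarrow> real" where
  "Q_term d x n = (if \<lfloor>x / real n\<rfloor> - \<lfloor>x / real (n+1)\<rfloor> = int d
       then (frac_part (x / real n) - frac_part (x / real (n+1)))\<^sup>2 else 0)"

definition excess :: "nat \<Rightarrow> real \<Rightarrow> nat \<Rightarrow> real" where
  "excess d x n = x / (real n * real (n+1)) - real d"

lemma Q_term_decomposition:
  assumes "n \<ge> 1"
  shows "Q_term d x n = bump (excess d x n)
     + (frac_part (x / real n) - frac_part (x / real (n+1)))
       * (clipped_square (excess d x n) - unit_jump (excess d x n))"
proof -
  define k where "k = \<lfloor>x / real n\<rfloor> - \<lfloor>x / real (n+1)\<rfloor> - int d"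
  define s where "s = frac_part (x / real n) - frac_part (x / real (n+1))"
  have "x / real n - x / real (n+1) = x / (real n * real (n+1))"
    using assms by (simp add: field_simps)
  then have "of_int k = excess d x n - s"
    unfolding k_def s_def excess_def frac_part_def by simp
  moreover have "\<bar>s\<bar> < 1"
    using frac_part_bounds[of "x / real n"] frac_part_bounds[of "x / real (n+1)"]
    unfolding s_def by linarith
  ultimately have "(if k = 0 then s\<^sup>2 else 0)
      = bump (excess d x n) + s * (clipped_square (excess d x n) - unit_jump (excess d x n))"
    by (intro bump_decomposition)
  then show ?thesis unfolding Q_term_def k_def s_def by simp
qed

lemma excess_decreasing:
  assumes "x > 0" "n \<ge> 1"
  shows "excess d x (Suc n) \<le> excess d x n"
  unfolding excess_def using assms by (simp add: frac_le mult_mono)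

lemma Q_eq_sum_Q_term:
  assumes d: "d \<ge> 1" and x: "x > 0" and N: "real N \<ge> x"
  shows "Q d x = (\<Sum>n=1..N. Q_term d x n)"
proof -
  have "Q d x = infsum (Q_term d x) {1..}" unfolding Q_def Q_term_def by simp
  also have "\<dots> = infsum (Q_term d x) {1..N}"
  proof (rule infsum_cong_neutral)
    fix n assume "n \<in> {1..} - {1..N}"
    then have "x < real n" using N by auto
    then have "\<lfloor>x / real n\<rfloor> = 0" "\<lfloor>x / real (n+1)\<rfloor> = 0"
      using x by (simp_all add: floor_eq_iff field_simps)
    then show "Q_term d x n = 0" using d unfolding Q_term_def by simp
  qed auto
  finally show ?thesis by simp
qed

lemma Q_term_le:
  assumes "d \<ge> 1" "x > 0" "n \<ge> 1"
  shows "Q_term d x n \<le> real_of_int (\<lfloor>x / real n\<rfloor> - \<lfloor>x / real (n+1)\<rfloor>) / real d"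
proof -
  have "x / real (n+1) \<le> x / real n" using assms by (simp add: frac_le)
  then have "\<lfloor>x / real (n+1)\<rfloor> \<le> \<lfloor>x / real n\<rfloor>" by (rule floor_mono)
  moreover have "(frac_part (x / real n) - frac_part (x / real (n+1)))\<^sup>2 \<le> 1"
    using frac_part_bounds[of "x / real n"] frac_part_bounds[of "x / real (n+1)"]
    by (simp add: abs_square_le_1)
  ultimately show ?thesis
    using assms unfolding Q_term_def by (cases "\<lfloor>x / real n\<rfloor> - \<lfloor>x / real (n+1)\<rfloor> = int d") auto
qed

lemma Q_nonneg: "0 \<le> Q d x"
  unfolding Q_def by (rule infsum_nonneg) auto

lemma Q_le:
  assumes d: "d \<ge> 1" and x: "x > 0"
  shows "Q d x \<le> x / real d"
proof -
  define N where "N = nat \<lceil>x\<rceil>"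
  have N: "real N \<ge> x" unfolding N_def by linarith
  have "Q d x \<le> (\<Sum>n=1..N. real_of_int (\<lfloor>x / real n\<rfloor> - \<lfloor>x / real (Suc n)\<rfloor>) / real d)"
    unfolding Q_eq_sum_Q_term[OF d x N] using Q_term_le[OF d x] by (intro sum_mono) auto
  also have "\<dots> = (real_of_int \<lfloor>x\<rfloor> - real_of_int \<lfloor>x / real (Suc N)\<rfloor>) / real d"
    using sum_telescope_atLeast1[of "\<lambda>n. real_of_int \<lfloor>x / real n\<rfloor>" N]
    by (simp add: sum_divide_distrib[symmetric])
  also have "\<dots> \<le> x / real d"
  proof (intro divide_right_mono)
    have "0 \<le> \<lfloor>x / real (Suc N)\<rfloor>" using x by simp
    then show "real_of_int \<lfloor>x\<rfloor> - real_of_int \<lfloor>x / real (Suc N)\<rfloor> \<le> x" by linarith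
  qed simp
  finally show ?thesis .
qed

lemma sum_oscillating_part_bound:
  assumes x: "x > 0"
  shows "\<bar>\<Sum>n=1..N. (frac_part (x / real n) - frac_part (x / real (n+1)))
                    * (clipped_square (excess d x n) - unit_jump (excess d x n))\<bar> \<le> 8"
proof -
  let ?a = "\<lambda>n. frac_part (x / real n)"
  have frac_abs: "\<bar>?a n\<bar> \<le> 1" for n using frac_part_bounds[of "x / real n"] by simp
  have "\<bar>\<Sum>n=1..N. (?a n - ?a (Suc n)) * clipped_square (excess d x n)\<bar> \<le> 4 * 1 * 1"
    by (rule abel_sum_bound) (auto simp: clipped_square_mono excess_decreasing[OF x] frac_abs
        abs_clipped_square_le)
  moreover have "\<bar>\<Sum>n=1..N. (?a n - ?a (Suc n)) * unit_jump (excess d x n)\<bar> \<le> 4 * 1 * 1"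
    by (rule abel_sum_bound) (auto simp: unit_jump_mono excess_decreasing[OF x] frac_abs
        abs_unit_jump_le)
  ultimately show ?thesis
    by (simp add: right_diff_distrib sum_subtractf)
qed

section \<open>The smooth part as an integral\<close>

text \<open>Substituting \<open>u = \<surd>(x/t)\<close> gives
  \<open>\<integral> bump(x/u\<^sup>2 - D) du = -(\<surd>x/2) \<integral> bump(t - D) t^(-3/2) dt\<close>. The functions \<open>B_minus\<close>
  and \<open>B_plus\<close> are primitives, in \<open>r = \<surd>t\<close>, of the pieces of this integrand on
  \<open>D - 1 \<le> t \<le> D\<close> and on \<open>D \<le> t \<le> D + 1\<close>.\<close>

definition B_minus :: "real \<Rightarrow> real \<Rightarrow> real" where
  "B_minus D r = 2/5*r^5 + 2/3*(1-3*D)*r^3 + 2*(3*D\<^sup>2-2*D)*r - 2*(1-D)*D\<^sup>2/r"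

definition B_plus :: "real \<Rightarrow> real \<Rightarrow> real" where
  "B_plus D r = -2/5*r^5 + 2/3*(3*D+1)*r^3 - 2*(3*D\<^sup>2+2*D)*r - 2*(D+1)*D\<^sup>2/r"

lemma B_minus_deriv:
  assumes "r \<noteq> 0"
  shows "(B_minus D has_real_derivative 2 * ((1 + (r\<^sup>2 - D)) * (r\<^sup>2 - D)\<^sup>2) / r\<^sup>2) (at r)"
  unfolding B_minus_def
  by (rule derivative_eq_intros refl | simp add: assms)+
    (use assms in \<open>simp add: field_simps power2_eq_square eval_nat_numeral\<close>)

lemma B_plus_deriv:
  assumes "r \<noteq> 0"
  shows "(B_plus D has_real_derivative 2 * ((1 - (r\<^sup>2 - D)) * (r\<^sup>2 - D)\<^sup>2) / r\<^sup>2) (at r)"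
  unfolding B_plus_def
  by (rule derivative_eq_intros refl | simp add: assms)+
    (use assms in \<open>simp add: field_simps power2_eq_square eval_nat_numeral\<close>)

lemma DERIV_comp_sqrt_div:
  assumes x: "x > 0" and v: "v > 0"
    and B: "\<And>r. r \<noteq> 0 \<Longrightarrow> (B has_real_derivative 2 * h (r\<^sup>2) / r\<^sup>2) (at r)"
  shows "((\<lambda>v. sqrt x / 2 * B (sqrt x / v)) has_real_derivative - h (x / v\<^sup>2)) (at v)"
proof -
  have r: "sqrt x / v \<noteq> 0" "(sqrt x / v)\<^sup>2 = x / v\<^sup>2" using x v by (simp_all add: power_divide)
  have "((\<lambda>v. sqrt x / 2 * B (sqrt x / v)) has_real_derivative
      sqrt x / 2 * (2 * h (x / v\<^sup>2) / (x / v\<^sup>2) * (- sqrt x / v\<^sup>2))) (at v)"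
    using B[OF r(1)] v unfolding r(2)
    by (auto intro!: derivative_eq_intros DERIV_chain2[where f = B] simp: power2_eq_square)
  also have "sqrt x / 2 * (2 * h (x / v\<^sup>2) / (x / v\<^sup>2) * (- sqrt x / v\<^sup>2)) = - h (x / v\<^sup>2)"
    using x v by (simp add: field_simps)
  finally show ?thesis .
qed

definition bump_primitive :: "nat \<Rightarrow> real \<Rightarrow> real \<Rightarrow> real" where
  "bump_primitive d x u = sqrt x / 2 *
     (B_minus (real d) (sqrt (max (real d - 1) (min (x / u\<^sup>2) (real d))))
      + B_plus (real d) (sqrt (max (real d) (min (x / u\<^sup>2) (real d + 1)))))"

lemma eventually_nhds_div_square_between:
  fixes x u a b :: real
  assumes u: "u > 0" and "a < x / u\<^sup>2" "x / u\<^sup>2 < b"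
  shows "eventually (\<lambda>v. v > 0 \<and> a < x / v\<^sup>2 \<and> x / v\<^sup>2 < b) (nhds u)"
proof -
  have "isCont (\<lambda>v. x / v\<^sup>2) u" using u by (intro continuous_intros) auto
  then have "((\<lambda>v. x / v\<^sup>2) \<longlongrightarrow> x / u\<^sup>2) (nhds u)"
    using tendsto_at_iff_tendsto_nhds[of "\<lambda>v. x / v\<^sup>2" u] by (simp add: isCont_def)
  from order_tendstoD(1)[OF this assms(2)] order_tendstoD(2)[OF this assms(3)]
    order_tendstoD(1)[OF filterlim_ident u]
  show ?thesis by eventually_elim auto
qed

lemma bump_primitive_deriv:
  assumes x: "x > 0" and u: "u > 0" and d: "d \<ge> 1"
    and ns: "x / u\<^sup>2 \<noteq> real d - 1" "x / u\<^sup>2 \<noteq> real d" "x / u\<^sup>2 \<noteq> real d + 1"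
  shows "(bump_primitive d x has_real_derivative - bump (x / u\<^sup>2 - real d)) (at u)"
proof -
  have const: "(bump_primitive d x has_real_derivative 0) (at u)"
    if "eventually (\<lambda>v. bump_primitive d x v = c) (nhds u)" for c
    by (subst DERIV_cong_ev[OF refl that refl]) (rule DERIV_const)
  consider "x / u\<^sup>2 < real d - 1" | "real d - 1 < x / u\<^sup>2" "x / u\<^sup>2 < real d"
    | "real d < x / u\<^sup>2" "x / u\<^sup>2 < real d + 1" | "real d + 1 < x / u\<^sup>2"
    using ns by linarith
  then show ?thesis
  proof cases
    case 1
    have "eventually (\<lambda>v. v > 0 \<and> -1 < x / v\<^sup>2 \<and> x / v\<^sup>2 < real d - 1) (nhds u)"
      using x u 1 by (intro eventually_nhds_div_square_between) (auto intro: less_le_trans[of _ 0])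
    then have "eventually (\<lambda>v. bump_primitive d x v = sqrt x / 2 *
        (B_minus (real d) (sqrt (real d - 1)) + B_plus (real d) (sqrt (real d)))) (nhds u)"
      by eventually_elim (auto simp: bump_primitive_def)
    then have "(bump_primitive d x has_real_derivative 0) (at u)" by (rule const)
    with 1 show ?thesis by (simp add: bump_def)
  next
    case 2
    have "eventually (\<lambda>v. v > 0 \<and> real d - 1 < x / v\<^sup>2 \<and> x / v\<^sup>2 < real d) (nhds u)"
      using x u 2 by (intro eventually_nhds_div_square_between) auto
    then have ev: "eventually (\<lambda>v. bump_primitive d x v = sqrt x / 2 * B_minus (real d) (sqrt x / v)
        + sqrt x / 2 * B_plus (real d) (sqrt (real d))) (nhds u)"
      by eventually_elim (auto simp: bump_primitive_def real_sqrt_divide algebra_simps)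
    have "bump (x / u\<^sup>2 - real d) = (1 + (x / u\<^sup>2 - real d)) * (x / u\<^sup>2 - real d)\<^sup>2"
      using 2 by (simp add: bump_def)
    moreover have D: "((\<lambda>v. sqrt x / 2 * B_minus (real d) (sqrt x / v)) has_real_derivative
        - ((1 + (x / u\<^sup>2 - real d)) * (x / u\<^sup>2 - real d)\<^sup>2)) (at u)"
      by (rule DERIV_comp_sqrt_div[OF x u, where h = "\<lambda>t. (1 + (t - real d)) * (t - real d)\<^sup>2"])
        (rule B_minus_deriv)
    ultimately show ?thesis
      using DERIV_add[OF D DERIV_const[of "sqrt x / 2 * B_plus (real d) (sqrt (real d))" "at u"]]
      by (subst DERIV_cong_ev[OF refl ev refl]) simp
  next
    case 3
    have "eventually (\<lambda>v. v > 0 \<and> real d < x / v\<^sup>2 \<and> x / v\<^sup>2 < real d + 1) (nhds u)"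
      using x u 3 by (intro eventually_nhds_div_square_between) auto
    then have ev: "eventually (\<lambda>v. bump_primitive d x v = sqrt x / 2 * B_minus (real d) (sqrt (real d))
        + sqrt x / 2 * B_plus (real d) (sqrt x / v)) (nhds u)"
      by eventually_elim (auto simp: bump_primitive_def real_sqrt_divide algebra_simps)
    have "bump (x / u\<^sup>2 - real d) = (1 - (x / u\<^sup>2 - real d)) * (x / u\<^sup>2 - real d)\<^sup>2"
      using 3 by (simp add: bump_def)
    moreover have D: "((\<lambda>v. sqrt x / 2 * B_plus (real d) (sqrt x / v)) has_real_derivative
        - ((1 - (x / u\<^sup>2 - real d)) * (x / u\<^sup>2 - real d)\<^sup>2)) (at u)"
      by (rule DERIV_comp_sqrt_div[OF x u, where h = "\<lambda>t. (1 - (t - real d)) * (t - real d)\<^sup>2"])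
        (rule B_plus_deriv)
    ultimately show ?thesis
      using DERIV_add[OF DERIV_const[of "sqrt x / 2 * B_minus (real d) (sqrt (real d))" "at u"] D]
      by (subst DERIV_cong_ev[OF refl ev refl]) simp
  next
    case 4
    have "eventually (\<lambda>v. v > 0 \<and> real d + 1 < x / v\<^sup>2 \<and> x / v\<^sup>2 < x / u\<^sup>2 + 1) (nhds u)"
      using x u 4 by (intro eventually_nhds_div_square_between) auto
    then have "eventually (\<lambda>v. bump_primitive d x v = sqrt x / 2 *
        (B_minus (real d) (sqrt (real d)) + B_plus (real d) (sqrt (real d + 1)))) (nhds u)"
      by eventually_elim (auto simp: bump_primitive_def)
    then have "(bump_primitive d x has_real_derivative 0) (at u)" by (rule const)
    with 4 show ?thesis by (simp add: bump_def)
  qed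
qed

lemma continuous_on_bump_primitive:
  assumes x: "x > 0" and d: "d \<ge> 1" and S: "S \<subseteq> {0<..}"
  shows "continuous_on S (bump_primitive d x)"
proof -
  have "sqrt (max (real d - 1) (min (x / u\<^sup>2) (real d))) \<noteq> 0" if "u \<in> S" for u
    using that S x d by (auto simp: max_def min_def)
  then show ?thesis
    unfolding bump_primitive_def B_minus_def B_plus_def using S d
    by (intro continuous_intros) auto
qed

text \<open>Capping at \<open>4(d+1)\<close> makes these error bounds telescope to \<open>O(d)\<close>.\<close>

lemma bump_excess_vs_integrand:
  assumes x: "x > 0" and n: "n \<ge> 1" and u: "real n \<le> u" "u \<le> real n + 1"
  shows "\<bar>bump (excess d x n) - bump (x / u\<^sup>2 - real d)\<bar>
     \<le> 5 * (min (x / (real n)\<^sup>2) (4 * (real d + 1)) - min (x / (real n + 1)\<^sup>2) (4 * (real d + 1)))"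
proof -
  have m: "real n \<ge> 1" using n by simp
  have "x / (real n + 1)\<^sup>2 \<le> x / u\<^sup>2" "x / u\<^sup>2 \<le> x / (real n)\<^sup>2"
    using x u m by (auto intro!: divide_left_mono power_mono mult_pos_pos)
  moreover have "real n * real (n+1) \<le> (real n + 1)\<^sup>2"
    by (simp add: power2_eq_square algebra_simps)
  then have "x / (real n + 1)\<^sup>2 \<le> x / (real n * real (n+1))"
    "x / (real n * real (n+1)) \<le> x / (real n)\<^sup>2"
    using x m by (auto intro!: divide_left_mono simp: power2_eq_square)
  ultimately have between: "x / (real n + 1)\<^sup>2 - real d \<le> excess d x n"
    "x / (real n + 1)\<^sup>2 - real d \<le> x / u\<^sup>2 - real d"
    "\<bar>excess d x n - (x / u\<^sup>2 - real d)\<bar> \<le> x / (real n)\<^sup>2 - x / (real n + 1)\<^sup>2"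
    unfolding excess_def by linarith+
  show ?thesis
  proof (cases "x / (real n + 1)\<^sup>2 < real d + 1")
    case True
    have "(real n + 1)\<^sup>2 \<le> (2 * real n)\<^sup>2"
      using m by (intro power_mono) auto
    then have "x / (real n)\<^sup>2 \<le> 4 * (x / (real n + 1)\<^sup>2)"
      using x m by (simp add: field_simps power_mult_distrib mult_left_mono)
    also have "\<dots> \<le> 4 * (real d + 1)" using True by simp
    finally have "x / (real n)\<^sup>2 \<le> 4 * (real d + 1)" .
    then show ?thesis
      using True bump_lipschitz[of "excess d x n" "x / u\<^sup>2 - real d"] between(3) by simp
  next
    case False
    then have "bump (excess d x n) = 0" "bump (x / u\<^sup>2 - real d) = 0"
      using between(1,2) by (simp_all add: bump_def)
    moreover have "x / (real n + 1)\<^sup>2 \<le> x / (real n)\<^sup>2"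
      using x m by (intro divide_left_mono power_mono) auto
    ultimately show ?thesis by (simp add: min_def)
  qed
qed

lemma bump_primitive_step:
  assumes x: "x > 0" and d: "d \<ge> 1" and n: "n \<ge> 1"
  shows "\<bar>bump (excess d x n) - (bump_primitive d x (real n) - bump_primitive d x (real n + 1))\<bar>
     \<le> 5 * (min (x / (real n)\<^sup>2) (4 * (real d + 1)) - min (x / (real n + 1)\<^sup>2) (4 * (real d + 1)))"
    (is "\<bar>?c - _\<bar> \<le> ?E")
proof -
  define F where "F u = bump_primitive d x u + ?c * u" for u
  define S where "S = {sqrt (x / (real d - 1)), sqrt (x / real d), sqrt (x / (real d + 1))}"
  have m: "real n \<ge> 1" using n by simp
  have deriv: "(F has_vector_derivative (?c - bump (x / u\<^sup>2 - real d))) (at u)"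
    if u: "u \<in> {real n<..<real n + 1} - S" for u
  proof -
    have u0: "u > 0" using u m by auto
    have "x / u\<^sup>2 \<noteq> t" if "u \<noteq> sqrt (x / t)" for t
      using that u0 x by (auto simp: real_sqrt_divide)
    then have ns: "x / u\<^sup>2 \<noteq> real d - 1" "x / u\<^sup>2 \<noteq> real d" "x / u\<^sup>2 \<noteq> real d + 1"
      using u by (auto simp: S_def)
    have "(F has_real_derivative (- bump (x / u\<^sup>2 - real d) + ?c * 1)) (at u)"
      unfolding F_def by (intro DERIV_add bump_primitive_deriv[OF x u0 d ns] DERIV_cmult DERIV_ident)
    then show ?thesis by (simp add: has_real_derivative_iff_has_vector_derivative[symmetric])
  qed
  have "continuous_on {real n..real n + 1} F"
    unfolding F_def using m by (intro continuous_intros continuous_on_bump_primitive[OF x d]) auto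
  then have int: "((\<lambda>u. ?c - bump (x / u\<^sup>2 - real d)) has_integral (F (real n + 1) - F (real n)))
      {real n..real n + 1}"
    using deriv by (intro fundamental_theorem_of_calculus_interior_strong[where S = S]) (auto simp: S_def)
  have E: "?E \<ge> 0"
    using bump_excess_vs_integrand[OF x n, of "real n" d] m by (smt (verit))
  have "norm (F (real n + 1) - F (real n)) \<le> ?E * Henstock_Kurzweil_Integration.content {real n..real n + 1}"
    using bump_excess_vs_integrand[OF x n] by (intro has_integral_bound_real[OF E finite.emptyI int]) auto
  moreover have "F (real n + 1) - F (real n)
      = ?c - (bump_primitive d x (real n) - bump_primitive d x (real n + 1))"
    unfolding F_def by (simp add: algebra_simps)
  ultimately show ?thesis by simp
qed

lemma sum_bump_excess_approx:
  assumes x: "x > 0" and d: "d \<ge> 1"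
  shows "\<bar>(\<Sum>n=1..N. bump (excess d x n)) - (bump_primitive d x 1 - bump_primitive d x (real N + 1))\<bar>
     \<le> 20 * real d + 20"
proof -
  define m where "m n = min (x / (real n)\<^sup>2) (4 * (real d + 1))" for n :: nat
  define P where "P n = bump_primitive d x (real n)" for n :: nat
  have "\<bar>(\<Sum>n=1..N. bump (excess d x n)) - (P 1 - P (Suc N))\<bar>
      = \<bar>\<Sum>n=1..N. bump (excess d x n) - (P n - P (Suc n))\<bar>"
    by (simp only: sum_telescope_atLeast1[of P N, symmetric] sum_subtractf)
  also have "\<dots> \<le> (\<Sum>n=1..N. \<bar>bump (excess d x n) - (P n - P (Suc n))\<bar>)"
    by (rule sum_abs)
  also have "\<dots> \<le> (\<Sum>n=1..N. 5 * (m n - m (Suc n)))"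
    using bump_primitive_step[OF x d] by (intro sum_mono) (simp add: m_def P_def add.commute)
  also have "\<dots> = 5 * (m 1 - m (Suc N))"
    using sum_telescope_atLeast1[of "\<lambda>n. 5 * m n" N] by (simp add: algebra_simps)
  also have "\<dots> \<le> 20 * real d + 20"
  proof -
    have "m 1 \<le> 4 * (real d + 1)" "0 \<le> m (Suc N)" using x by (auto simp: m_def)
    then show ?thesis by (simp add: algebra_simps)
  qed
  finally show ?thesis by (simp add: P_def add.commute)
qed

section \<open>The asymptotic formula\<close>

lemma sqrt_power_odd:
  assumes "c \<ge> 0"
  shows "sqrt c ^ 3 = c * sqrt c" "sqrt c ^ 5 = c\<^sup>2 * sqrt c"
  using assms by (simp_all add: eval_nat_numeral power2_eq_square algebra_simps)

lemma divide_sqrt: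
  assumes "c \<ge> 0"
  shows "a / sqrt c = a * sqrt c / c"
  using assms by (cases "c = 0") (simp_all add: field_simps)

lemma B_minus_at_sqrt:
  assumes "c \<ge> 0"
  shows "B_minus D (sqrt c) = sqrt c * (2/5*c\<^sup>2 + 2/3*(1-3*D)*c + 2*(3*D\<^sup>2-2*D) - 2*(1-D)*D\<^sup>2/c)"
  using assms unfolding B_minus_def sqrt_power_odd[OF assms] divide_sqrt[OF assms]
  by (simp add: field_simps)

lemma B_plus_at_sqrt:
  assumes "c \<ge> 0"
  shows "B_plus D (sqrt c) = sqrt c * (-2/5*c\<^sup>2 + 2/3*(3*D+1)*c - 2*(3*D\<^sup>2+2*D) - 2*(D+1)*D\<^sup>2/c)"
  using assms unfolding B_plus_def sqrt_power_odd[OF assms] divide_sqrt[OF assms]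
  by (simp add: field_simps)

lemma B_at_sqrt_D_values:
  fixes D :: real
  assumes "D \<ge> 1"
  shows "B_minus D (sqrt (D - 1)) = sqrt (D - 1) * (32/5 * D\<^sup>2 - 32/15 * D - 4/15)"
    and "B_minus D (sqrt D) = sqrt D * (32/5 * D\<^sup>2 - 16/3 * D)"
    and "B_plus D (sqrt D) = sqrt D * (- 32/5 * D\<^sup>2 - 16/3 * D)"
    and "B_plus D (sqrt (D + 1)) = sqrt (D + 1) * (- 32/5 * D\<^sup>2 - 32/15 * D + 4/15)"
proof -
  have "D - 1 \<ge> 0" "D > 0" "D + 1 > 0" using assms by simp_all
  note B = B_minus_at_sqrt[OF this(1)] B_minus_at_sqrt[OF less_imp_le[OF this(2)]]
    B_plus_at_sqrt[OF less_imp_le[OF this(2)]] B_plus_at_sqrt[OF less_imp_le[OF this(3)]]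
  show "B_minus D (sqrt (D - 1)) = sqrt (D - 1) * (32/5 * D\<^sup>2 - 32/15 * D - 4/15)"
    unfolding B(1) using assms by (cases "D = 1") (simp_all add: field_simps power2_eq_square)
  show "B_minus D (sqrt D) = sqrt D * (32/5 * D\<^sup>2 - 16/3 * D)"
    unfolding B(2) using assms by (simp add: field_simps power2_eq_square)
  show "B_plus D (sqrt D) = sqrt D * (- 32/5 * D\<^sup>2 - 16/3 * D)"
    unfolding B(3) using assms by (simp add: field_simps power2_eq_square)
  show "B_plus D (sqrt (D + 1)) = sqrt (D + 1) * (- 32/5 * D\<^sup>2 - 32/15 * D + 4/15)"
    unfolding B(4) using assms by (simp add: field_simps power2_eq_square)
qed

lemma vartheta_eq_B:
  assumes "d \<ge> 1"
  shows "vartheta d = ((B_minus (real d) (sqrt (real d)) + B_plus (real d) (sqrt (real d + 1)))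
      - (B_minus (real d) (sqrt (real d - 1)) + B_plus (real d) (sqrt (real d)))) / 2"
proof -
  have d: "real d \<ge> 1" using assms by simp
  show ?thesis unfolding B_at_sqrt_D_values[OF d] vartheta_def by (simp add: field_simps)
qed

lemma bump_primitive_at_1:
  assumes "x \<ge> real d + 1"
  shows "bump_primitive d x 1
    = sqrt x / 2 * (B_minus (real d) (sqrt (real d)) + B_plus (real d) (sqrt (real d + 1)))"
  using assms unfolding bump_primitive_def by simp

lemma abs_B_minus_1_le:
  assumes "0 \<le> r" "r \<le> 1"
  shows "\<bar>B_minus 1 r\<bar> \<le> 4 * r"
proof -
  have "r ^ 5 \<le> r" "r ^ 3 \<le> r" "0 \<le> r ^ 5" "0 \<le> r ^ 3"
    using assms power_decreasing[of 1 _ r] by simp_all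
  moreover have "B_minus 1 r = 2/5 * r^5 - 4/3 * r^3 + 2 * r" by (simp add: B_minus_def)
  ultimately show ?thesis using assms unfolding abs_le_iff by linarith
qed

text \<open>For \<open>d = 1\<close> the lower cut-off \<open>d - 1 = 0\<close> of \<open>x/u\<^sup>2\<close> is never reached; the
  resulting discrepancy is \<open>O(x/N)\<close>.\<close>

lemma bump_primitive_at_end:
  assumes x: "x > 0" and d: "d \<ge> 1" and N: "real N \<ge> x"
  shows "\<bar>bump_primitive d x (real N + 1)
           - sqrt x / 2 * (B_minus (real d) (sqrt (real d - 1)) + B_plus (real d) (sqrt (real d)))\<bar> \<le> 2"
proof -
  define s where "s = x / (real N + 1)\<^sup>2"
  have "s \<le> x / (real N + 1)" unfolding s_def using x
    by (intro divide_left_mono) (auto simp: power2_eq_square)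
  also have "\<dots> < 1" using N x by (simp add: divide_less_eq)
  finally have s: "0 < s" "s < 1" unfolding s_def using x by auto
  show ?thesis
  proof (cases "d = 1")
    case False
    then show ?thesis using s d unfolding bump_primitive_def s_def[symmetric] by simp
  next
    case True
    have eq: "bump_primitive d x (real N + 1)
           - sqrt x / 2 * (B_minus (real d) (sqrt (real d - 1)) + B_plus (real d) (sqrt (real d)))
        = sqrt x / 2 * B_minus 1 (sqrt s)"
      using True s unfolding bump_primitive_def s_def[symmetric]
      by (simp add: B_minus_def algebra_simps)
    have "\<bar>bump_primitive d x (real N + 1)
           - sqrt x / 2 * (B_minus (real d) (sqrt (real d - 1)) + B_plus (real d) (sqrt (real d)))\<bar>
        = sqrt x / 2 * \<bar>B_minus 1 (sqrt s)\<bar>"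
      unfolding eq using x by (simp add: abs_mult)
    also have "\<dots> \<le> sqrt x / 2 * (4 * sqrt s)"
      using abs_B_minus_1_le[of "sqrt s"] s x by (intro mult_left_mono) auto
    also have "\<dots> = 2 * (x / (real N + 1))"
      unfolding s_def using x by (simp add: real_sqrt_divide power2_eq_square)
    also have "\<dots> \<le> 2" using N x by (simp add: divide_le_eq)
    finally show ?thesis .
  qed
qed

lemma Q_estimate_large:
  assumes d: "d \<ge> 1" and x: "x \<ge> real d + 1"
  shows "\<bar>Q d x - vartheta d * sqrt x\<bar> \<le> 20 * real d + 30"
proof -
  have x0: "x > 0" using x by simp
  define N where "N = nat \<lceil>x\<rceil>"
  have N: "real N \<ge> x" unfolding N_def by linarith
  define smooth where "smooth = (\<Sum>n=1..N. bump (excess d x n))"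
  define oscillating where "oscillating = (\<Sum>n=1..N.
      (frac_part (x / real n) - frac_part (x / real (n+1)))
      * (clipped_square (excess d x n) - unit_jump (excess d x n)))"
  define boundary where "boundary =
      sqrt x / 2 * (B_minus (real d) (sqrt (real d - 1)) + B_plus (real d) (sqrt (real d)))"
  have "Q d x = smooth + oscillating"
    unfolding Q_eq_sum_Q_term[OF d x0 N] smooth_def oscillating_def sum.distrib[symmetric]
    by (intro sum.cong) (auto simp: Q_term_decomposition)
  moreover have "vartheta d * sqrt x = bump_primitive d x 1 - boundary"
    unfolding bump_primitive_at_1[OF x] vartheta_eq_B[OF d] boundary_def by (simp add: field_simps)
  ultimately show ?thesis
    using sum_bump_excess_approx[OF x0 d, of N] sum_oscillating_part_bound[OF x0, of d N]
      bump_primitive_at_end[OF x0 d N]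
    unfolding smooth_def[symmetric] oscillating_def[symmetric] boundary_def[symmetric] abs_le_iff
    by linarith
qed

lemma abs_vartheta_le:
  assumes d: "d \<ge> 1"
  shows "\<bar>vartheta d * sqrt (real d + 1)\<bar> \<le> 20 * real d + 32"
proof -
  have "(real d + 1) / real d \<le> 2" using d by (simp add: divide_le_eq)
  then have "Q d (real d + 1) \<le> 2" using Q_le[OF d, of "real d + 1"] by simp
  then show ?thesis
    using Q_estimate_large[OF d order_refl] Q_nonneg[of d "real d + 1"]
    unfolding abs_le_iff by linarith
qed

lemma Q_estimate:
  assumes d: "d \<ge> 1" and x: "x > 0"
  shows "\<bar>Q d x - vartheta d * sqrt x\<bar> \<le> 20 * real d + 34"
proof (cases "x \<ge> real d + 1")
  case True
  then show ?thesis using Q_estimate_large[OF d] by fastforce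
next
  case False
  have "x / real d \<le> 2" using False d by (simp add: divide_le_eq)
  then have "Q d x \<le> 2" using Q_le[OF d x] by simp
  moreover have "\<bar>vartheta d * sqrt x\<bar> \<le> \<bar>vartheta d * sqrt (real d + 1)\<bar>"
    using False x by (simp add: abs_mult mult_left_mono)
  ultimately show ?thesis
    using abs_vartheta_le[OF d] Q_nonneg[of d x] unfolding abs_le_iff by linarith
qed

theorem proposition10:
  shows "\<exists>C::real. \<forall>d::nat. \<forall>x::real. d \<ge> 1 \<longrightarrow> x > 0 \<longrightarrow>
           \<bar>Q d x - vartheta d * sqrt x\<bar> \<le> C * (real d)\<^sup>2"
proof (intro exI allI impI)
  fix d :: nat and x :: real
  assume d: "d \<ge> 1" and x: "x > 0"
  have "real d \<le> (real d)\<^sup>2" using d by (simp add: power2_eq_square)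
  moreover have "1 \<le> (real d)\<^sup>2" using d by (simp add: one_le_power)
  ultimately show "\<bar>Q d x - vartheta d * sqrt x\<bar> \<le> 54 * (real d)\<^sup>2"
    using Q_estimate[OF d x] by linarith
qed

end
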